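(* Let $(L,\le,(\sqsubseteq_\alpha)_{\alpha<\kappa})$ be a model of Axioms 1–4. Let $(x_\alpha)_{\alpha<\kappa}$ be a compatible sequence and let $x=\bigvee_{\alpha<\kappa}x_\alpha$. Then $x|_\alpha=x_\alpha$ for all $\alpha<\kappa$. Consequently, the following two maps are mutually inverse bijections between $L$ and the set of compatible sequences: - $x\mapsto(x|_\alpha)_{\alpha<\kappa}$; - $(x_\alpha)_{\alpha<\kappa}\mapsto\bigvee_{\alpha<\kappa}x_\alpha$.
   Context: Setting (model of Axioms 1–4). Let $(L,\le)$ be a complete lattice with join operation $\bigvee$ and least element $\perp$. Let $\kappa>0$ be an ordinal, and for each ordinal $\alpha<\kappa$ let $\sqsubseteq_\alpha$ be a preorder on $L$. Derived relation: $x=_\alpha y$ means $x\sqsubseteq_\alpha y$ and $y\sqsubseteq_\alpha x$. Derived sets, for $x\in L$ and $\alpha<\kappa$: - $(x]_\alpha=\{y\in L:\forall\beta<\alpha,\ x=_\beta y\}$. - $[x]_\alpha=\{y\in L: x=_\alpha y\}$. For a set $X$, $X\sqsubseteq_\alpha y$ means $x\sqsubseteq_\alpha y$ for all $x\in X$. The structure is a model of Axioms 1–4 if: - (A1) for all $\alpha<\beta<\kappa$, $x\sqsubseteq_\beta y$ implies $x=_\alpha y$; - (A2) $\bigcap_{\alpha<\kappa}=_\alpha$ is the identity relation on $L$; - (A3) for every $x\in L$, every $\alpha<\kappa$ and every $X\subseteq(x]_\alpha$ there is $y\in(x]_\alpha$ with $X\sqsubseteq_\alpha y$ such that for all $z\in(x]_\alpha$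 with $X\sqsubseteq_\alpha z$ we have $y\sqsubseteq_\alpha z$ and $y\le z$; - (A4) for every nonempty $X\subseteq L$, every $\alpha<\kappa$ and every $y\in L$, if $y=_\alpha x$ for all $x\in X$ then $y=_\alpha\bigvee X$. The element $y$ of (A3) is unique and is denoted $\bigsqcup_\alpha X$. The slice of $x$ at $\alpha$ is $x|_\alpha:=\bigsqcup_\alpha\{x\}$, where $\{x\}\subseteq(x]_\alpha$. A sequence $(x_\alpha)_{\alpha<\kappa}$ in $L$ is compatible if each $x_\alpha$ is the $\le$-least element of $[x_\alpha]_\alpha$ and $x_\alpha=_\alpha x_\beta$ for all $\alpha<\beta<\kappa$. *)

theory Defs
  imports Main
begin

text \<open>The ordinal kappa > 0 is represented by a (nonempty) well-ordered index type 'i: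
the ordinals alpha < kappa are the elements of 'i. The family of preorders
(sqsubseteq_alpha) is R :: 'i => 'a => 'a => bool, with L = 'a a complete lattice.\<close>

definition eqa :: "('i \<Rightarrow> 'a \<Rightarrow> 'a \<Rightarrow> bool) \<Rightarrow> 'i \<Rightarrow> 'a \<Rightarrow> 'a \<Rightarrow> bool" where
  "eqa R \<alpha> x y \<longleftrightarrow> R \<alpha> x y \<and> R \<alpha> y x"

definition lowerset :: "('i::wellorder \<Rightarrow> 'a \<Rightarrow> 'a \<Rightarrow> bool) \<Rightarrow> 'a \<Rightarrow> 'i \<Rightarrow> 'a set" where
  "lowerset R x \<alpha> = {y. \<forall>\<beta><\<alpha>. eqa R \<beta> x y}"

definition cls :: "('i \<Rightarrow> 'a \<Rightarrow> 'a \<Rightarrow> bool) \<Rightarrow> 'a \<Rightarrow> 'i \<Rightarrow> 'a set" where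
  "cls R x \<alpha> = {y. eqa R \<alpha> x y}"

definition set_below :: "('i \<Rightarrow> 'a \<Rightarrow> 'a \<Rightarrow> bool) \<Rightarrow> 'i \<Rightarrow> 'a set \<Rightarrow> 'a \<Rightarrow> bool" where
  "set_below R \<alpha> X y \<longleftrightarrow> (\<forall>x\<in>X. R \<alpha> x y)"

definition is_join :: "('i::wellorder \<Rightarrow> 'a::order \<Rightarrow> 'a \<Rightarrow> bool) \<Rightarrow> 'a \<Rightarrow> 'i \<Rightarrow> 'a set \<Rightarrow> 'a \<Rightarrow> bool" where
  "is_join R x \<alpha> X y \<longleftrightarrow> y \<in> lowerset R x \<alpha> \<and> set_below R \<alpha> X y \<and>
     (\<forall>z\<in>lowerset R x \<alpha>. set_below R \<alpha> X z \<longrightarrow> R \<alpha> y z \<and> y \<le> z)"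

definition model_axioms :: "('i::wellorder \<Rightarrow> 'a::complete_lattice \<Rightarrow> 'a \<Rightarrow> bool) \<Rightarrow> bool" where
  "model_axioms R \<longleftrightarrow>
     (\<forall>\<alpha>. reflp (R \<alpha>) \<and> transp (R \<alpha>)) \<and>
     (\<forall>\<alpha> \<beta> x y. \<alpha> < \<beta> \<longrightarrow> R \<beta> x y \<longrightarrow> eqa R \<alpha> x y) \<and>
     (\<forall>x y. (\<forall>\<alpha>. eqa R \<alpha> x y) \<longrightarrow> x = y) \<and>
     (\<forall>x \<alpha> X. X \<subseteq> lowerset R x \<alpha> \<longrightarrow> (\<exists>y. is_join R x \<alpha> X y)) \<and>
     (\<forall>X \<alpha> y. X \<noteq> {} \<longrightarrow> (\<forall>x\<in>X. eqa R \<alpha> y x) \<longrightarrow> eqa R \<alpha> y (Sup X))"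

definition join_at :: "('i::wellorder \<Rightarrow> 'a::order \<Rightarrow> 'a \<Rightarrow> bool) \<Rightarrow> 'a \<Rightarrow> 'i \<Rightarrow> 'a set \<Rightarrow> 'a" where
  "join_at R x \<alpha> X = (THE y. is_join R x \<alpha> X y)"

definition slice :: "('i::wellorder \<Rightarrow> 'a::order \<Rightarrow> 'a \<Rightarrow> bool) \<Rightarrow> 'a \<Rightarrow> 'i \<Rightarrow> 'a" where
  "slice R x \<alpha> = join_at R x \<alpha> {x}"

definition compatible :: "('i::wellorder \<Rightarrow> 'a::order \<Rightarrow> 'a \<Rightarrow> bool) \<Rightarrow> ('i \<Rightarrow> 'a) \<Rightarrow> bool" where
  "compatible R s \<longleftrightarrow>
     (\<forall>\<alpha>. s \<alpha> \<in> cls R (s \<alpha>) \<alpha> \<and> (\<forall>y\<in>cls R (s \<alpha>) \<alpha>. s \<alpha> \<le> y)) \<and>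
     (\<forall>\<alpha> \<beta>. \<alpha> < \<beta> \<longrightarrow> eqa R \<alpha> (s \<alpha>) (s \<beta>))"

end

theory Submission
  imports Defs
begin

text \<open>The slice \<open>x|\<^sub>\<alpha>\<close> is the \<open>\<le>\<close>-least element of \<open>[x]\<^sub>\<alpha>\<close>. A compatible sequence \<open>s\<close> is
  monotone, so \<open>\<Squnion>\<^sub>\<beta> s \<beta>\<close> is also the join of the tail \<open>s \<beta>\<close>, \<open>\<beta> \<ge> \<alpha>\<close>, all of whose
  members are \<open>=\<^sub>\<alpha> s \<alpha>\<close>; by Axiom 4 the join lies in \<open>[s \<alpha>]\<^sub>\<alpha>\<close>, whose least element is
  \<open>s \<alpha>\<close>. Conversely the slices of \<open>x\<close> form a compatible sequence whose join is
  \<open>=\<^sub>\<alpha> x\<close> for every \<open>\<alpha>\<close>, hence equals \<open>x\<close> by Axiom 2.\<close>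

locale model =
  fixes R :: "'i::wellorder \<Rightarrow> 'a::complete_lattice \<Rightarrow> 'a \<Rightarrow> bool"
  assumes model_axioms: "model_axioms R"
begin

lemma R_refl: "R \<alpha> x x"
  using model_axioms unfolding model_axioms_def reflp_def by (elim conjE) simp

lemma R_trans: "R \<alpha> x y \<Longrightarrow> R \<alpha> y z \<Longrightarrow> R \<alpha> x z"
  using model_axioms unfolding model_axioms_def by (elim conjE) (metis transpD)

lemma eqa_if_less_level: "\<alpha> < \<beta> \<Longrightarrow> R \<beta> x y \<Longrightarrow> eqa R \<alpha> x y"
  using model_axioms unfolding model_axioms_def by (elim conjE) simp

lemma eq_if_eqa_all: "(\<And>\<alpha>. eqa R \<alpha> x y) \<Longrightarrow> x = y"
  using model_axioms unfolding model_axioms_def by (elim conjE) simp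

lemma is_join_exists: "X \<subseteq> lowerset R x \<alpha> \<Longrightarrow> \<exists>y. is_join R x \<alpha> X y"
  using model_axioms unfolding model_axioms_def by (elim conjE) simp

lemma eqa_Sup: "X \<noteq> {} \<Longrightarrow> (\<And>x. x \<in> X \<Longrightarrow> eqa R \<alpha> y x) \<Longrightarrow> eqa R \<alpha> y (Sup X)"
  using model_axioms unfolding model_axioms_def by (elim conjE) simp
lemma eqa_refl: "eqa R \<alpha> x x"
  by (simp add: eqa_def R_refl)

lemma eqa_sym: "eqa R \<alpha> x y \<Longrightarrow> eqa R \<alpha> y x"
  by (simp add: eqa_def)

lemma eqa_trans: "eqa R \<alpha> x y \<Longrightarrow> eqa R \<alpha> y z \<Longrightarrow> eqa R \<alpha> x z"
  unfolding eqa_def using R_trans by blast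

lemma eqa_less_level: "\<alpha> < \<beta> \<Longrightarrow> eqa R \<beta> x y \<Longrightarrow> eqa R \<alpha> x y"
  using eqa_if_less_level unfolding eqa_def by blast

lemma is_join_unique: "is_join R x \<alpha> X y \<Longrightarrow> is_join R x \<alpha> X y' \<Longrightarrow> y = y'"
  unfolding is_join_def by (meson order_antisym)

lemma slice_is_join: "is_join R x \<alpha> {x} (slice R x \<alpha>)"
proof -
  have "{x} \<subseteq> lowerset R x \<alpha>"
    by (auto simp: lowerset_def eqa_refl)
  then obtain y where "is_join R x \<alpha> {x} y"
    using is_join_exists by blast
  then show ?thesis
    unfolding slice_def join_at_def by (metis is_join_unique theI)
qed

lemma eqa_slice: "eqa R \<alpha> x (slice R x \<alpha>)"
proof -
  have "x \<in> lowerset R x \<alpha>" and "set_below R \<alpha> {x} x"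
    by (simp_all add: lowerset_def set_below_def eqa_refl R_refl)
  then show ?thesis
    using slice_is_join unfolding is_join_def eqa_def set_below_def by blast
qed

lemma slice_le_if_eqa: "eqa R \<alpha> x y \<Longrightarrow> slice R x \<alpha> \<le> y"
proof -
  assume xy: "eqa R \<alpha> x y"
  then have "y \<in> lowerset R x \<alpha>" and "set_below R \<alpha> {x} y"
    by (auto simp: lowerset_def set_below_def eqa_def dest: eqa_less_level)
  then show ?thesis
    using slice_is_join unfolding is_join_def by blast
qed

lemma compatible_slices: "compatible R (\<lambda>\<alpha>. slice R x \<alpha>)"
  unfolding compatible_def cls_def
proof (intro conjI allI impI ballI CollectI)
  fix \<alpha>
  show "eqa R \<alpha> (slice R x \<alpha>) (slice R x \<alpha>)"
    by (rule eqa_refl)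
  fix y
  assume "y \<in> {y. eqa R \<alpha> (slice R x \<alpha>) y}"
  then show "slice R x \<alpha> \<le> y"
    by (simp add: slice_le_if_eqa eqa_trans[OF eqa_slice])
next
  fix \<alpha> \<beta> :: 'i
  assume "\<alpha> < \<beta>"
  then have "eqa R \<alpha> x (slice R x \<beta>)"
    using eqa_less_level eqa_slice by blast
  then show "eqa R \<alpha> (slice R x \<alpha>) (slice R x \<beta>)"
    by (rule eqa_trans[OF eqa_sym[OF eqa_slice]])
qed

lemma compatible_mono:
  assumes "compatible R s" and "\<alpha> \<le> \<beta>"
  shows "s \<alpha> \<le> s \<beta>"
  using assms unfolding compatible_def cls_def
  by (cases "\<alpha> = \<beta>") (auto simp: less_le)

lemma compatible_eqa_Sup:
  assumes s: "compatible R s"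
  shows "eqa R \<alpha> (s \<alpha>) (SUP \<beta>. s \<beta>)"
proof -
  have tail: "(SUP \<beta>. s \<beta>) = (SUP \<beta>\<in>{\<alpha>..}. s \<beta>)"
  proof (rule order_antisym)
    show "(SUP \<beta>. s \<beta>) \<le> (SUP \<beta>\<in>{\<alpha>..}. s \<beta>)"
      by (rule SUP_mono) (use compatible_mono[OF s] in \<open>auto intro: max.cobounded1 max.cobounded2\<close>)
    show "(SUP \<beta>\<in>{\<alpha>..}. s \<beta>) \<le> (SUP \<beta>. s \<beta>)"
      by (rule SUP_subset_mono) auto
  qed
  have "eqa R \<alpha> (s \<alpha>) (SUP \<beta>\<in>{\<alpha>..}. s \<beta>)"
  proof (rule eqa_Sup)
    fix y
    assume "y \<in> s ` {\<alpha>..}"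
    then obtain \<beta> where "\<alpha> \<le> \<beta>" and "y = s \<beta>"
      by auto
    then show "eqa R \<alpha> (s \<alpha>) y"
      using s eqa_refl unfolding compatible_def by (cases "\<alpha> = \<beta>") auto
  qed auto
  then show ?thesis
    by (simp only: tail)
qed

lemma slice_Sup_compatible:
  assumes s: "compatible R s"
  shows "slice R (SUP \<beta>. s \<beta>) \<alpha> = s \<alpha>"
proof (rule order_antisym)
  have s_Sup: "eqa R \<alpha> (s \<alpha>) (SUP \<beta>. s \<beta>)"
    by (rule compatible_eqa_Sup[OF s])
  then show "slice R (SUP \<beta>. s \<beta>) \<alpha> \<le> s \<alpha>"
    by (rule slice_le_if_eqa[OF eqa_sym])
  have "eqa R \<alpha> (s \<alpha>) (slice R (SUP \<beta>. s \<beta>) \<alpha>)"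
    by (rule eqa_trans[OF s_Sup eqa_slice])
  then show "s \<alpha> \<le> slice R (SUP \<beta>. s \<beta>) \<alpha>"
    using s unfolding compatible_def cls_def by blast
qed

lemma Sup_slices: "(SUP \<alpha>. slice R x \<alpha>) = x"
proof (rule sym, rule eq_if_eqa_all)
  fix \<alpha>
  show "eqa R \<alpha> x (SUP \<beta>. slice R x \<beta>)"
    using eqa_trans[OF eqa_slice compatible_eqa_Sup[OF compatible_slices]] .
qed

lemma bij_betw_slices: "bij_betw (\<lambda>x \<alpha>. slice R x \<alpha>) UNIV {s. compatible R s}"
proof (rule bij_betw_byWitness[where f' = "\<lambda>s. SUP \<beta>. s \<beta>"])
  show "\<forall>s\<in>{s. compatible R s}. (\<lambda>\<alpha>. slice R (SUP \<beta>. s \<beta>) \<alpha>) = s"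
    by (simp add: slice_Sup_compatible)
qed (auto simp: Sup_slices compatible_slices)

end

theorem mainTheorem10:
  fixes R :: "'i::wellorder \<Rightarrow> 'a::complete_lattice \<Rightarrow> 'a \<Rightarrow> bool"
  assumes "model_axioms R"
  shows "(\<forall>s. compatible R s \<longrightarrow> (\<forall>\<alpha>. slice R (SUP \<beta>. s \<beta>) \<alpha> = s \<alpha>))
    \<and> (\<forall>x. compatible R (\<lambda>\<alpha>. slice R x \<alpha>))
    \<and> (\<forall>x. (SUP \<alpha>. slice R x \<alpha>) = x)
    \<and> (\<forall>s. compatible R s \<longrightarrow> (\<lambda>\<alpha>. slice R (SUP \<beta>. s \<beta>) \<alpha>) = s)
    \<and> bij_betw (\<lambda>x \<alpha>. slice R x \<alpha>) UNIV {s. compatible R s}"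
proof -
  interpret model R
    using assms by unfold_locales
  show ?thesis
    by (simp add: slice_Sup_compatible compatible_slices Sup_slices bij_betw_slices)
qed

end
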